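(* Let $n\ge3$ and suppose $T=T_\lambda(r,m)$ acts linearly and inner faithfully on $\Bbbk\overline{Q}$ so that $g$ acts by a rotation: $g\cdot e_i=e_{i+d}$, $g\cdot a_i=\mu_ia_{i+d}$, $g\cdot a_i^*=\mu_i^*a^*_{i+d}$ for some integer $0<d\le n-1$ and $\mu_i,\mu_i^*\in\Bbbk^\times$. Let $\sigma$ be the quiver-Taft map of the action. Then there exist $c_0,c_1,c_0^*,c_1^*\in\Bbbk$ such that for all $0\le i\le n-1$ (empty products being $1$): $$\sigma(a_i)=\begin{cases}\lambda^{i/2}\frac{\mu_i\mu_{i-2}\cdots\mu_2}{\mu^*_{i-1}\mu^*_{i-3}\cdots\mu^*_1}c_0a^*_{i-1} & d=n-2,\ i\text{ even},\\ \lambda^{(i-1)/2}\frac{\mu_i\mu_{i-2}\cdots\mu_3}{\mu^*_{i-1}\mu^*_{i-3}\cdots\mu^*_2}c_1a^*_{i-1} & d=n-2,\ i\text{ odd},\\ \lambda^i(\mu_i\mu_{i-1}\cdots\mu_1)c_0e_i & d=n-1,\\ 0 & d\ne n-1,n-2,\end{cases}$$ $$\sigma(a_i^* )=\begin{cases}\lambda^{-i/2}\frac{\mu_{i-1}\mu_{i-3}\cdots\mu_1}{\mu^*_{i-2}\mu^*_{i-4}\cdots\mu^*_0}c_0^*a_{i+1} & d=2,\ i\text{ even},\\ \lambda^{-(i-1)/2}\frac{\mu_{i-1}\mu_{i-3}\cdots\mu_2}{\mu^*_{i-2}\mu^*_{i-4}\cdots\mu^*_1}c_1^*a_{i+1}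 & d=2,\ i\text{ odd},\\ (\lambda^i\mu^*_{i-1}\mu^*_{i-2}\cdots\mu^*_0)^{-1}c_0^*e_{i+1} & d=1,\\ 0 & d\neq1,2.\end{cases}$$
   Context: Let $\Bbbk$ be a field, $r>1$ and $m$ positive integers with $r\mid m$, and $\lambda\in\Bbbk$ a primitive $r$-th root of unity, with $r$ coprime to the characteristic of $\Bbbk$. The generalized Taft algebra $T=T_\lambda(r,m)$ is the Hopf algebra generated by $g,x$ with relations $gx=\lambda xg$, $g^m=1$, $x^r=0$, $\Delta(g)=g\otimes g$, $\Delta(x)=1\otimes x+x\otimes g$, $\varepsilon(g)=1,\varepsilon(x)=0$, $S(g)=g^{-1}$, $S(x)=-xg^{-1}$. An action of $T$ on an algebra $A$ is a $T$-module algebra structure; so $g$ acts by an algebra automorphism and $x\cdot(ab)=a(x\cdot b)+(x\cdot a)(g\cdot b)$. It is inner faithful if no nonzero Hopf ideal $I$ of $T$ satisfies $I\cdot A=0$. Vertex indices are taken modulo $n$. $\overline{Q}$ has vertices $0,\dots,n-1$ and arrows $a_i:i\to i+1$, $a_i^*:i+1\to i$; in $\Bbbk\overline{Q}$, $e_i$ is the trivial path at $i$, $s(a),t(a)$ source and target, and $pq$ is concatenation ($p$ then $q$) if $t(p)=s(q)$, else $0$. A linear action: $g$ acts by a path-length-preserving automorphism ($g\cdot e_i=e_{g\cdot i}$) and $x$ maps vertices into the span of vertices and arrows into the span of vertices and arrows. Then there are scalars $\gamma_i$ with $x\cdot e_i=\gamma_ie_i-\gamma_i\lambda^{-1}e_{g\cdot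 i}$; the quiver-Taft map $\sigma$ is the linear map on the span of vertices and arrows with $\sigma(e_i)=0$ and $\sigma(a)=x\cdot a-\gamma_{t(a)}a+\gamma_{s(a)}\lambda^{-1}(g\cdot a)$ for arrows $a$. (It satisfies $\sigma(a)=e_{s(a)}\sigma(a)e_{g\cdot t(a)}$ and $\sigma(g\cdot a)=\lambda^{-1}g\cdot\sigma(a)$.) *)

theory Defs
  imports Main
begin

text \<open>Arrows of the double cyclic quiver on vertices 0..n-1: (i,True) is a_i : i -> i+1,
  (i,False) is a_i^* : i+1 -> i (vertex indices mod n).\<close>

type_synonym arrow = "nat \<times> bool"
type_synonym qpath = "nat \<times> arrow list"

definition asrc :: "nat \<Rightarrow> arrow \<Rightarrow> nat" where
  "asrc n a = (if snd a then fst a else (fst a + 1) mod n)"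

definition atgt :: "nat \<Rightarrow> arrow \<Rightarrow> nat" where
  "atgt n a = (if snd a then (fst a + 1) mod n else fst a)"

fun walk :: "nat \<Rightarrow> nat \<Rightarrow> arrow list \<Rightarrow> bool" where
  "walk n v [] = True"
| "walk n v (a # as) = (fst a < n \<and> asrc n a = v \<and> walk n (atgt n a) as)"

fun endv :: "nat \<Rightarrow> nat \<Rightarrow> arrow list \<Rightarrow> nat" where
  "endv n v [] = v"
| "endv n v (a # as) = endv n (atgt n a) as"

definition valid_path :: "nat \<Rightarrow> qpath \<Rightarrow> bool" where
  "valid_path n p = (fst p < n \<and> walk n (fst p) (snd p))"

definition ptgt :: "nat \<Rightarrow> qpath \<Rightarrow> nat" where
  "ptgt n p = endv n (fst p) (snd p)"

definition supp :: "('b \<Rightarrow> 'k::zero) \<Rightarrow> 'b set" where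
  "supp f = {p. f p \<noteq> 0}"

definition PA :: "nat \<Rightarrow> (qpath \<Rightarrow> 'k::field) set" where
  "PA n = {f. finite (supp f) \<and> (\<forall>p. f p \<noteq> 0 \<longrightarrow> valid_path n p)}"

definition pmul :: "nat \<Rightarrow> (qpath \<Rightarrow> 'k::field) \<Rightarrow> (qpath \<Rightarrow> 'k) \<Rightarrow> (qpath \<Rightarrow> 'k)" where
  "pmul n f h = (\<lambda>w. \<Sum>pq \<in> {(p,q). p \<in> supp f \<and> q \<in> supp h \<and> ptgt n p = fst q
        \<and> (fst p, snd p @ snd q) = w}. f (fst pq) * h (snd pq))"

definition padd :: "(qpath \<Rightarrow> 'k::field) \<Rightarrow> (qpath \<Rightarrow> 'k) \<Rightarrow> (qpath \<Rightarrow> 'k)" where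
  "padd f h = (\<lambda>w. f w + h w)"

definition psmult :: "'k::field \<Rightarrow> (qpath \<Rightarrow> 'k) \<Rightarrow> (qpath \<Rightarrow> 'k)" where
  "psmult c f = (\<lambda>w. c * f w)"

definition bvec :: "'a \<Rightarrow> 'a \<Rightarrow> 'k::field" where
  "bvec p = (\<lambda>q. if q = p then 1 else 0)"

definition vert :: "nat \<Rightarrow> qpath \<Rightarrow> 'k::field" where
  "vert i = bvec (i, [])"

definition arrel :: "nat \<Rightarrow> arrow \<Rightarrow> qpath \<Rightarrow> 'k::field" where
  "arrel n a = bvec (asrc n a, [a])"

definition arrA :: "nat \<Rightarrow> nat \<Rightarrow> qpath \<Rightarrow> 'k::field" where
  "arrA n i = arrel n (i, True)"

definition arrS :: "nat \<Rightarrow> nat \<Rightarrow> qpath \<Rightarrow> 'k::field" where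
  "arrS n i = arrel n (i, False)"

definition punit :: "nat \<Rightarrow> qpath \<Rightarrow> 'k::field" where
  "punit n = (\<lambda>w. if snd w = [] \<and> fst w < n then 1 else 0)"

definition plen :: "nat \<Rightarrow> nat \<Rightarrow> (qpath \<Rightarrow> 'k::field) set" where
  "plen n l = {f \<in> PA n. \<forall>p. f p \<noteq> 0 \<longrightarrow> length (snd p) = l}"

definition ple1 :: "nat \<Rightarrow> (qpath \<Rightarrow> 'k::field) set" where
  "ple1 n = {f \<in> PA n. \<forall>p. f p \<noteq> 0 \<longrightarrow> length (snd p) \<le> 1}"

text \<open>A T-module algebra structure on the path algebra, given by the k-linear operators
  G (action of g) and X (action of x); these respect the defining relations of T and
  the module-algebra axioms for the generators (which determine the whole structure).\<close>
definition taft_module_algebra ::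
  "nat \<Rightarrow> 'k::field \<Rightarrow> nat \<Rightarrow> nat \<Rightarrow> ((qpath \<Rightarrow> 'k) \<Rightarrow> (qpath \<Rightarrow> 'k))
     \<Rightarrow> ((qpath \<Rightarrow> 'k) \<Rightarrow> (qpath \<Rightarrow> 'k)) \<Rightarrow> bool" where
  "taft_module_algebra n lam r m G X \<longleftrightarrow>
     (\<forall>f\<in>PA n. G f \<in> PA n \<and> X f \<in> PA n) \<and>
     (\<forall>f\<in>PA n. \<forall>h\<in>PA n. G (padd f h) = padd (G f) (G h) \<and> X (padd f h) = padd (X f) (X h)) \<and>
     (\<forall>c. \<forall>f\<in>PA n. G (psmult c f) = psmult c (G f) \<and> X (psmult c f) = psmult c (X f)) \<and>
     (\<forall>f\<in>PA n. (G ^^ m) f = f \<and> (X ^^ r) f = (\<lambda>_. 0) \<and> G (X f) = psmult lam (X (G f))) \<and>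
     G (punit n) = punit n \<and> X (punit n) = (\<lambda>_. 0) \<and>
     (\<forall>f\<in>PA n. \<forall>h\<in>PA n. G (pmul n f h) = pmul n (G f) (G h) \<and>
         X (pmul n f h) = padd (pmul n f (X h)) (pmul n (X f) (G h)))"

text \<open>Elements of T are coefficient functions on the basis g^j x^k, j<m, k<r;
  elements of T (x) T are coefficient functions on pairs of basis indices.\<close>
definition tbasis :: "nat \<Rightarrow> nat \<Rightarrow> (nat \<times> nat) set" where
  "tbasis m r = {..<m} \<times> {..<r}"

definition Tcar :: "nat \<Rightarrow> nat \<Rightarrow> (nat \<times> nat \<Rightarrow> 'k::field) set" where
  "Tcar m r = {t. \<forall>p. t p \<noteq> 0 \<longrightarrow> p \<in> tbasis m r}"

text \<open>(g^a x^b)(g^c x^d) = lambda^(-bc) g^(a+c) x^(b+d).\<close>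
definition tmul :: "'k::field \<Rightarrow> nat \<Rightarrow> nat \<Rightarrow> (nat \<times> nat \<Rightarrow> 'k) \<Rightarrow> (nat \<times> nat \<Rightarrow> 'k)
    \<Rightarrow> (nat \<times> nat \<Rightarrow> 'k)" where
  "tmul lam m r s t = (\<lambda>z. if z \<in> tbasis m r then
      (\<Sum>pq \<in> tbasis m r \<times> tbasis m r.
         if (fst (fst pq) + fst (snd pq)) mod m = fst z \<and> snd (fst pq) + snd (snd pq) = snd z
         then inverse (lam ^ (snd (fst pq) * fst (snd pq))) * s (fst pq) * t (snd pq) else 0)
      else 0)"

definition tpow :: "'k::field \<Rightarrow> nat \<Rightarrow> nat \<Rightarrow> (nat \<times> nat \<Rightarrow> 'k) \<Rightarrow> nat \<Rightarrow> (nat \<times> nat \<Rightarrow> 'k)" where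
  "tpow lam m r t k = (tmul lam m r t ^^ k) (bvec (0,0))"

definition tmul2 :: "'k::field \<Rightarrow> nat \<Rightarrow> nat
    \<Rightarrow> ((nat \<times> nat) \<times> (nat \<times> nat) \<Rightarrow> 'k) \<Rightarrow> ((nat \<times> nat) \<times> (nat \<times> nat) \<Rightarrow> 'k)
    \<Rightarrow> ((nat \<times> nat) \<times> (nat \<times> nat) \<Rightarrow> 'k)" where
  "tmul2 lam m r P Q = (\<lambda>z.
      \<Sum>pq \<in> tbasis m r \<times> tbasis m r. \<Sum>pq' \<in> tbasis m r \<times> tbasis m r.
         P pq * Q pq' * tmul lam m r (bvec (fst pq)) (bvec (fst pq')) (fst z)
                      * tmul lam m r (bvec (snd pq)) (bvec (snd pq')) (snd z))"

definition tpow2 :: "'k::field \<Rightarrow> nat \<Rightarrow> nat \<Rightarrow> ((nat \<times> nat) \<times> (nat \<times> nat) \<Rightarrow> 'k) \<Rightarrow> nat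
    \<Rightarrow> ((nat \<times> nat) \<times> (nat \<times> nat) \<Rightarrow> 'k)" where
  "tpow2 lam m r P k = (tmul2 lam m r P ^^ k) (bvec ((0,0),(0,0)))"

text \<open>Delta(g) = g (x) g, Delta(x) = 1 (x) x + x (x) g, extended multiplicatively and linearly.\<close>
definition tcomult :: "'k::field \<Rightarrow> nat \<Rightarrow> nat \<Rightarrow> (nat \<times> nat \<Rightarrow> 'k)
    \<Rightarrow> ((nat \<times> nat) \<times> (nat \<times> nat) \<Rightarrow> 'k)" where
  "tcomult lam m r t = (\<lambda>z. \<Sum>p \<in> tbasis m r. t p *
      tmul2 lam m r (tpow2 lam m r (bvec ((1,0),(1,0))) (fst p))
        (tpow2 lam m r (\<lambda>y. bvec ((0,0),(0,1)) y + bvec ((0,1),(1,0)) y) (snd p)) z)"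

definition tcounit :: "nat \<Rightarrow> (nat \<times> nat \<Rightarrow> 'k::field) \<Rightarrow> 'k" where
  "tcounit m t = (\<Sum>j<m. t (j, 0))"

text \<open>S(g^j x^k) = S(x)^k S(g)^j with S(g) = g^(m-1), S(x) = - x g^(m-1).\<close>
definition tanti :: "'k::field \<Rightarrow> nat \<Rightarrow> nat \<Rightarrow> (nat \<times> nat \<Rightarrow> 'k) \<Rightarrow> (nat \<times> nat \<Rightarrow> 'k)" where
  "tanti lam m r t = (\<lambda>z. \<Sum>p \<in> tbasis m r. t p *
      tmul lam m r
        (tpow lam m r (\<lambda>y. - tmul lam m r (bvec (0,1)) (bvec (m - 1, 0)) y) (snd p))
        (tpow lam m r (bvec (m - 1, 0)) (fst p)) z)"

definition tensor_sum :: "(nat \<times> nat \<Rightarrow> 'k::field) set \<Rightarrow> (nat \<times> nat \<Rightarrow> 'k) set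
    \<Rightarrow> ((nat \<times> nat) \<times> (nat \<times> nat) \<Rightarrow> 'k) set" where
  "tensor_sum I T = {P. \<exists>(N::nat) u v. (\<forall>k<N. (u k \<in> I \<and> v k \<in> T) \<or> (u k \<in> T \<and> v k \<in> I)) \<and>
        P = (\<lambda>z. \<Sum>k<N. u k (fst z) * v k (snd z))}"

definition hopf_ideal :: "'k::field \<Rightarrow> nat \<Rightarrow> nat \<Rightarrow> (nat \<times> nat \<Rightarrow> 'k) set \<Rightarrow> bool" where
  "hopf_ideal lam m r I \<longleftrightarrow>
     I \<subseteq> Tcar m r \<and> (\<lambda>_. 0) \<in> I \<and>
     (\<forall>s\<in>I. \<forall>t\<in>I. (\<lambda>z. s z + t z) \<in> I) \<and>
     (\<forall>s\<in>Tcar m r. \<forall>t\<in>I. tmul lam m r s t \<in> I \<and> tmul lam m r t s \<in> I) \<and>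
     (\<forall>t\<in>I. tcounit m t = 0) \<and>
     (\<forall>t\<in>I. tcomult lam m r t \<in> tensor_sum I (Tcar m r)) \<and>
     (\<forall>t\<in>I. tanti lam m r t \<in> I)"

definition tact :: "nat \<Rightarrow> nat \<Rightarrow> ((qpath \<Rightarrow> 'k::field) \<Rightarrow> (qpath \<Rightarrow> 'k))
    \<Rightarrow> ((qpath \<Rightarrow> 'k) \<Rightarrow> (qpath \<Rightarrow> 'k)) \<Rightarrow> (nat \<times> nat \<Rightarrow> 'k) \<Rightarrow> (qpath \<Rightarrow> 'k) \<Rightarrow> (qpath \<Rightarrow> 'k)" where
  "tact m r G X t f = (\<lambda>w. \<Sum>p \<in> tbasis m r. t p * (G ^^ fst p) ((X ^^ snd p) f) w)"

definition inner_faithful :: "nat \<Rightarrow> 'k::field \<Rightarrow> nat \<Rightarrow> nat \<Rightarrow> ((qpath \<Rightarrow> 'k) \<Rightarrow> (qpath \<Rightarrow> 'k))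
    \<Rightarrow> ((qpath \<Rightarrow> 'k) \<Rightarrow> (qpath \<Rightarrow> 'k)) \<Rightarrow> bool" where
  "inner_faithful n lam r m G X \<longleftrightarrow>
     \<not> (\<exists>I. hopf_ideal lam m r I \<and> (\<exists>t\<in>I. t \<noteq> (\<lambda>_. 0)) \<and>
            (\<forall>t\<in>I. \<forall>f\<in>PA n. tact m r G X t f = (\<lambda>_. 0)))"

text \<open>gamma_j is the coefficient of e_j in x . e_j (for g.j /= j this is the scalar
  with x.e_j = gamma_j e_j - gamma_j lambda^-1 e_(g.j)).\<close>
definition qgamma :: "((qpath \<Rightarrow> 'k::field) \<Rightarrow> (qpath \<Rightarrow> 'k)) \<Rightarrow> nat \<Rightarrow> 'k" where
  "qgamma X j = X (vert j) (j, [])"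

definition qtaft_sigma :: "nat \<Rightarrow> 'k::field \<Rightarrow> ((qpath \<Rightarrow> 'k) \<Rightarrow> (qpath \<Rightarrow> 'k))
    \<Rightarrow> ((qpath \<Rightarrow> 'k) \<Rightarrow> (qpath \<Rightarrow> 'k)) \<Rightarrow> arrow \<Rightarrow> (qpath \<Rightarrow> 'k)" where
  "qtaft_sigma n lam G X a = (\<lambda>w. X (arrel n a) w - qgamma X (atgt n a) * arrel n a w
       + qgamma X (asrc n a) * inverse lam * G (arrel n a) w)"

end

theory Submission
  imports Defs
begin

(*
  Write k' = (k + d) mod n for the image of the vertex k under g.  The twisted Leibniz rule
  for x applied to e_k = e_k e_k and to 0 = e_k' e_k, together with g x = lambda x g, gives
  x.e_k = gamma_k e_k - gamma_k lambda^-1 e_k'.  Applied to a = e_s a = a e_t for an arrow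
  a : s -> t it then yields sigma(a) = e_s (x.a) e_t'.  As x.a is a combination of paths of
  length at most 1, sigma(a_i) can only be a multiple of e_i (when d = n - 1) or of a*_(i-1)
  (when d = n - 2), and sigma(a*_i) only a multiple of e_(i+1) (d = 1) or of a_(i+1) (d = 2).
  Finally g x = lambda x g gives sigma(g.a) = lambda^-1 g.sigma(a), a recurrence linking the
  coefficients at indices i and i + 1 (vertex cases) or i and i + 2 (arrow cases, whence the
  separate constants for even and odd i); solving it produces the products in the statement.
*)

lemma add_mod_cases:
  "(a::nat) < n \<Longrightarrow> b < n \<Longrightarrow> (a + b) mod n = (if a + b < n then a + b else a + b - n)"
  by (simp add: le_mod_geq)

lemma Suc_mod_cases: "(a::nat) < n \<Longrightarrow> Suc a mod n = (if Suc a < n then Suc a else 0)"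
  by (cases "Suc a = n") auto

lemma Suc_mod_pred: "(j::nat) < n \<Longrightarrow> ((j + 1) mod n + n - 1) mod n = j"
  by (cases "j + 1 = n") (simp_all add: le_mod_geq)

lemma mod_eq_of_eq_add: "a = j + n \<Longrightarrow> j < n \<Longrightarrow> a mod n = (j::nat)"
  by simp

lemma pred_mod_Suc: "(k::nat) < n \<Longrightarrow> ((k + n - 1) mod n + 1) mod n = k"
  by (cases "k = 0") (simp_all add: le_mod_geq)

lemma supp_bvec [simp]: "supp (bvec p :: _ \<Rightarrow> 'k::field) = {p}"
  by (auto simp: supp_def bvec_def)

lemma ptgt_Nil [simp]: "ptgt n (v, []) = v"
  by (simp add: ptgt_def)

lemma ptgt_single [simp]: "ptgt n (v, [b]) = atgt n b"
  by (simp add: ptgt_def)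

lemma vert_apply: "(vert i :: qpath \<Rightarrow> 'k::field) w = (if w = (i, []) then 1 else 0)"
  by (simp add: vert_def bvec_def)

lemma arrel_apply: "(arrel n a :: qpath \<Rightarrow> 'k::field) w = (if w = (asrc n a, [a]) then 1 else 0)"
  by (simp add: arrel_def bvec_def)

lemma vert_in_PA: "i < n \<Longrightarrow> (vert i :: qpath \<Rightarrow> 'k::field) \<in> PA n"
  unfolding PA_def vert_def by (simp, simp add: bvec_def valid_path_def)

lemma arrel_in_PA: "0 < n \<Longrightarrow> fst a < n \<Longrightarrow> (arrel n a :: qpath \<Rightarrow> 'k::field) \<in> PA n"
  unfolding PA_def arrel_def by (simp, simp add: bvec_def valid_path_def asrc_def)

lemma psmult_in_PA: "f \<in> PA n \<Longrightarrow> psmult c f \<in> PA n"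
  by (auto simp: PA_def psmult_def supp_def elim: rev_finite_subset)

lemma eq_psmult_bvec_if_supp_single:
  assumes "\<And>w. f w \<noteq> 0 \<Longrightarrow> w = p"
  shows "f = psmult (f p) (bvec p)"
  using assms by (auto simp: psmult_def bvec_def fun_eq_iff)

lemma valid_path_length_le_1 [consumes 2]:
  assumes "valid_path n w" "length (snd w) \<le> 1"
  obtains (trivial) "snd w = []"
    | (arrow) j b where "snd w = [(j, b)]" "j < n" "asrc n (j, b) = fst w" "ptgt n w = atgt n (j, b)"
  using assms by (cases w; cases "snd w") (auto simp: valid_path_def ptgt_def)

lemma pmul_trivial_left:
  assumes "\<forall>p. V p \<noteq> 0 \<longrightarrow> snd p = []"
  shows "pmul n V h w = V (fst w, []) * h w"
proof -
  have "pmul n V h w = (\<Sum>pq\<in>{((fst w, []), w)}. V (fst pq) * h (snd pq))"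
    unfolding pmul_def using assms
    by (intro sum.mono_neutral_left) (fastforce simp: supp_def prod_eq_iff)+
  then show ?thesis by simp
qed

lemma pmul_trivial_right:
  assumes "\<forall>p. V p \<noteq> 0 \<longrightarrow> snd p = []"
  shows "pmul n h V w = h w * V (ptgt n w, [])"
proof -
  have "pmul n h V w = (\<Sum>pq\<in>{(w, (ptgt n w, []))}. h (fst pq) * V (snd pq))"
    unfolding pmul_def using assms
    by (intro sum.mono_neutral_left) (fastforce simp: supp_def prod_eq_iff)+
  then show ?thesis by simp
qed

lemma pmul_vert_left: "pmul n (vert i) (h :: qpath \<Rightarrow> 'k::field) w = (if fst w = i then h w else 0)"
  by (simp add: pmul_trivial_left vert_apply)

lemma pmul_vert_right: "pmul n (h :: qpath \<Rightarrow> 'k::field) (vert i) w = (if ptgt n w = i then h w else 0)"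
  by (simp add: pmul_trivial_right vert_apply)

lemma pmul_vert_left_in_PA: "h \<in> PA n \<Longrightarrow> pmul n (vert i) (h :: qpath \<Rightarrow> 'k::field) \<in> PA n"
  by (auto simp: PA_def supp_def pmul_vert_left elim: rev_finite_subset)

lemma prod_recurrence:
  fixes c f :: "nat \<Rightarrow> 'a::comm_monoid_mult"
  assumes step: "\<And>k. k + s < n \<Longrightarrow> c (k + s) = f k * c k" and lt: "s * j + e < n"
  shows "c (s * j + e) = (\<Prod>l<j. f (s * l + e)) * c e"
  using lt
proof (induction j)
  case (Suc j)
  have "c (s * Suc j + e) = f (s * j + e) * c (s * j + e)"
    using step[of "s * j + e"] Suc.prems by (simp add: algebra_simps)
  then show ?case using Suc by (simp add: mult_ac)
qed simp

locale taft_vertex_rotation =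
  fixes n :: nat and lam :: "'k::field" and r m :: nat
    and G X :: "(qpath \<Rightarrow> 'k) \<Rightarrow> (qpath \<Rightarrow> 'k)" and d :: nat
  assumes lam_nz: "lam \<noteq> 0"
    and action: "taft_module_algebra n lam r m G X"
    and X_vert: "\<forall>i<n. X (vert i) \<in> plen n 0"
    and d_pos: "0 < d" and d_less: "d < n"
    and G_vert: "\<forall>i<n. G (vert i) = vert ((i + d) mod n)"
begin

lemma n_pos: "0 < n"
  using d_less by simp

lemma n_ge_2: "2 \<le> n"
  using d_pos d_less by simp

lemma X_in_PA: "f \<in> PA n \<Longrightarrow> X f \<in> PA n"
  and G_psmult: "f \<in> PA n \<Longrightarrow> G (psmult c f) = psmult c (G f)"
  and X_psmult: "f \<in> PA n \<Longrightarrow> X (psmult c f) = psmult c (X f)"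
  and G_padd: "f \<in> PA n \<Longrightarrow> h \<in> PA n \<Longrightarrow> G (padd f h) = padd (G f) (G h)"
  and G_X: "f \<in> PA n \<Longrightarrow> G (X f) = psmult lam (X (G f))"
  and G_pmul: "f \<in> PA n \<Longrightarrow> h \<in> PA n \<Longrightarrow> G (pmul n f h) = pmul n (G f) (G h)"
  and X_pmul: "f \<in> PA n \<Longrightarrow> h \<in> PA n \<Longrightarrow>
      X (pmul n f h) = padd (pmul n f (X h)) (pmul n (X f) (G h))"
  using action by (simp_all add: taft_module_algebra_def)

lemma X_zero: "X (\<lambda>_. 0) = (\<lambda>_. 0)"
  using X_psmult[OF vert_in_PA[OF n_pos], of 0] by (simp add: psmult_def)

lemma shift_neq: "k < n \<Longrightarrow> (k + d) mod n \<noteq> k"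
  using d_pos d_less by (auto simp: add_mod_cases)

lemma X_vert_trivial: "k < n \<Longrightarrow> \<forall>p. X (vert k) p \<noteq> 0 \<longrightarrow> snd p = []"
  using X_vert by (auto simp: plen_def)

lemma X_vert_vanishes:
  assumes k: "k < n" and j: "j \<noteq> k" "j \<noteq> (k + d) mod n"
  shows "X (vert k) (j, []) = 0"
proof -
  have "pmul n (vert k) (vert k) = (vert k :: qpath \<Rightarrow> 'k)"
    by (rule ext) (simp add: pmul_vert_left vert_apply)
  then have "X (vert k) =
      padd (pmul n (vert k) (X (vert k))) (pmul n (X (vert k)) (vert ((k + d) mod n)))"
    using X_pmul[OF vert_in_PA[OF k] vert_in_PA[OF k]] G_vert k by simp
  then have "X (vert k) (j, []) = padd (pmul n (vert k) (X (vert k)))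
      (pmul n (X (vert k)) (vert ((k + d) mod n))) (j, [])"
    by simp
  then show ?thesis
    using j by (simp add: padd_def pmul_vert_left pmul_vert_right)
qed

lemma X_vert_eq_combination:
  assumes k: "k < n"
  shows "X (vert k) = padd (psmult (qgamma X k) (vert k))
                           (psmult (X (vert k) ((k + d) mod n, [])) (vert ((k + d) mod n)))"
proof (rule ext)
  fix w :: qpath
  show "X (vert k) w = padd (psmult (qgamma X k) (vert k))
                           (psmult (X (vert k) ((k + d) mod n, [])) (vert ((k + d) mod n))) w"
    using X_vert_trivial[OF k, rule_format, of w] X_vert_vanishes[OF k, of "fst w"] shift_neq[OF k]
    by (cases w) (auto simp: padd_def psmult_def vert_apply qgamma_def)
qed

lemma X_vert_at_shift:
  assumes k: "k < n"
  shows "X (vert k) ((k + d) mod n, []) = - qgamma X ((k + d) mod n)"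
proof -
  let ?k' = "(k + d) mod n"
  have k': "?k' < n" using n_pos by simp
  have "pmul n (vert ?k') (vert k) = (\<lambda>_. 0 :: 'k)"
    using shift_neq[OF k] by (auto simp: fun_eq_iff pmul_vert_left vert_apply)
  then have "(\<lambda>_. 0) =
      padd (pmul n (vert ?k') (X (vert k))) (pmul n (X (vert ?k')) (vert ?k'))"
    using X_pmul[OF vert_in_PA[OF k'] vert_in_PA[OF k]] G_vert k X_zero by simp
  then have "0 = pmul n (vert ?k') (X (vert k)) (?k', [])
      + pmul n (X (vert ?k')) (vert ?k') (?k', [])"
    by (metis padd_def)
  then show ?thesis
    by (simp add: pmul_vert_left pmul_vert_right qgamma_def eq_neg_iff_add_eq_0)
qed

lemma qgamma_eq_lam_qgamma_shift:
  assumes k: "k < n"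
  shows "qgamma X k = lam * qgamma X ((k + d) mod n)"
proof -
  let ?k' = "(k + d) mod n"
  let ?k'' = "(?k' + d) mod n"
  have k': "?k' < n" using n_pos by simp
  have "psmult lam (X (vert ?k')) = G (X (vert k))"
    using G_X[OF vert_in_PA[OF k]] G_vert k by simp
  also have "\<dots> =
      padd (psmult (qgamma X k) (vert ?k')) (psmult (X (vert k) (?k', [])) (vert ?k''))"
    by (subst X_vert_eq_combination[OF k])
      (simp add: G_padd G_psmult psmult_in_PA vert_in_PA k k' G_vert)
  finally have "psmult lam (X (vert ?k')) (?k', [])
      = padd (psmult (qgamma X k) (vert ?k')) (psmult (X (vert k) (?k', [])) (vert ?k'')) (?k', [])"
    by simp
  then show ?thesis
    using shift_neq[OF k'] by (simp add: psmult_def padd_def vert_apply qgamma_def)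
qed

lemma X_vert_eq:
  assumes k: "k < n"
  shows "X (vert k) = padd (psmult (qgamma X k) (vert k))
                           (psmult (- qgamma X k / lam) (vert ((k + d) mod n)))"
  using X_vert_eq_combination[OF k] X_vert_at_shift[OF k] qgamma_eq_lam_qgamma_shift[OF k] lam_nz
  by simp

end

locale taft_rotation_action = taft_vertex_rotation n lam r m G X d
  for n :: nat and lam :: "'k::field" and r m :: nat
    and G X :: "(qpath \<Rightarrow> 'k) \<Rightarrow> (qpath \<Rightarrow> 'k)" and d :: nat +
  fixes mu mus :: "nat \<Rightarrow> 'k"
  assumes X_arr: "\<forall>i<n. \<forall>b. X (arrel n (i, b)) \<in> ple1 n"
    and mu_nz: "\<forall>i<n. mu i \<noteq> 0 \<and> mus i \<noteq> 0"
    and G_a: "\<forall>i<n. G (arrA n i) = psmult (mu i) (arrA n ((i + d) mod n))"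
    and G_as: "\<forall>i<n. G (arrS n i) = psmult (mus i) (arrS n ((i + d) mod n))"
begin

abbreviation sigma :: "arrow \<Rightarrow> qpath \<Rightarrow> 'k" where
  "sigma \<equiv> qtaft_sigma n lam G X"

definition shift_arrow :: "arrow \<Rightarrow> arrow" where
  "shift_arrow a = ((fst a + d) mod n, snd a)"

definition rot_coeff :: "arrow \<Rightarrow> 'k" where
  "rot_coeff a = (if snd a then mu (fst a) else mus (fst a))"

lemma G_arrel:
  assumes "fst a < n"
  shows "G (arrel n a) = psmult (rot_coeff a) (arrel n (shift_arrow a))"
  using assms G_a G_as
  by (cases a; cases "snd a") (auto simp: rot_coeff_def shift_arrow_def arrA_def arrS_def)

lemma asrc_shift_arrow: "asrc n (shift_arrow a) = (asrc n a + d) mod n"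
  and atgt_shift_arrow: "atgt n (shift_arrow a) = (atgt n a + d) mod n"
  by (simp_all add: asrc_def atgt_def shift_arrow_def mod_Suc_eq mod_add_right_eq ac_simps)

(* Pointwise forms of (1 - e_s)(x.a) = - gamma_s lambda^-1 g.a and (x.a)(1 - e_t') = gamma_t a,
   phrased so that x.a occurs on one side only; otherwise the simplifier loops on them. *)
lemma X_arrel_src_tgt:
  assumes a: "fst a < n"
  defines "s \<equiv> asrc n a" and "t \<equiv> atgt n a"
  shows "(if fst w = s then 0 else X (arrel n a) w) = - qgamma X s / lam * G (arrel n a) w"
    and "(if ptgt n w = (t + d) mod n then 0 else X (arrel n a) w) = qgamma X t * arrel n a w"
proof -
  define A where "A = (arrel n a :: qpath \<Rightarrow> 'k)"
  have s: "s < n" and t: "t < n"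
    using a n_pos by (simp_all add: s_def t_def asrc_def atgt_def)
  have A: "A \<in> PA n"
    using arrel_in_PA[OF n_pos a] by (simp add: A_def)
  have "pmul n (vert s) A = A" and "pmul n A (vert t) = A"
    by (simp_all add: fun_eq_iff pmul_vert_left pmul_vert_right A_def arrel_apply s_def t_def)
  then have "X A = padd (pmul n (vert s) (X A)) (pmul n (X (vert s)) (G A))"
    and "X A = padd (pmul n A (X (vert t))) (pmul n (X A) (vert ((t + d) mod n)))"
    using X_pmul[OF vert_in_PA[OF s] A] X_pmul[OF A vert_in_PA[OF t]] G_vert t by simp_all
  then have "X A w = padd (pmul n (vert s) (X A)) (pmul n (X (vert s)) (G A)) w"
    and "X A w = padd (pmul n A (X (vert t))) (pmul n (X A) (vert ((t + d) mod n))) w"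
    by simp_all
  then have left: "X A w = (if fst w = s then X A w else 0) + X (vert s) (fst w, []) * G A w"
    and right: "X A w =
      A w * X (vert t) (ptgt n w, []) + (if ptgt n w = (t + d) mod n then X A w else 0)"
    unfolding padd_def pmul_vert_left pmul_vert_right
      pmul_trivial_left[OF X_vert_trivial[OF s]] pmul_trivial_right[OF X_vert_trivial[OF t]] .
  have "G A w \<noteq> 0 \<Longrightarrow> fst w = (s + d) mod n"
    using G_arrel[OF a]
    by (auto simp: A_def psmult_def arrel_apply asrc_shift_arrow s_def split: if_splits)
  then have "X (vert s) (fst w, []) * G A w = - qgamma X s / lam * G A w"
    using shift_neq[OF s]
    by (cases "G A w = 0") (auto simp: X_vert_eq[OF s] padd_def psmult_def vert_apply)
  with left show "(if fst w = s then 0 else X (arrel n a) w) = - qgamma X s / lam * G (arrel n a) w"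
    by (cases "fst w = s") (auto simp: A_def)
  have "A w \<noteq> 0 \<Longrightarrow> ptgt n w = t"
    by (auto simp: A_def arrel_apply t_def split: if_splits)
  with right shift_neq[OF t]
  show "(if ptgt n w = (t + d) mod n then 0 else X (arrel n a) w) = qgamma X t * arrel n a w"
    by (cases "A w = 0") (auto simp: A_def qgamma_def)
qed

lemma sigma_eq_restrict:
  assumes a: "fst a < n"
  shows "sigma a w = (if fst w = asrc n a \<and> ptgt n w = (atgt n a + d) mod n
                      then X (arrel n a) w else 0)"
proof -
  have "G (arrel n a) w \<noteq> 0 \<Longrightarrow> ptgt n w = (atgt n a + d) mod n"
    using G_arrel[OF a] by (auto simp: psmult_def arrel_apply atgt_shift_arrow split: if_splits)
  then show ?thesis
    using X_arrel_src_tgt[OF a, of w] lam_nz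
    by (cases "ptgt n w = (atgt n a + d) mod n"; cases "fst w = asrc n a")
      (auto simp: qtaft_sigma_def divide_inverse)
qed

lemma sigma_eq_pmul:
  assumes a: "fst a < n"
  shows "sigma a = pmul n (pmul n (vert (asrc n a)) (X (arrel n a))) (vert ((atgt n a + d) mod n))"
  by (rule ext) (simp add: sigma_eq_restrict[OF a] pmul_vert_left pmul_vert_right)

lemma sigma_shift_arrow:
  assumes a: "fst a < n"
  shows "sigma (shift_arrow a) = psmult (inverse (rot_coeff a * lam)) (G (sigma a))"
proof -
  define s t' where "s = asrc n a" and "t' = (atgt n a + d) mod n"
  define A where "A = (arrel n a :: qpath \<Rightarrow> 'k)"
  have s: "s < n" and t': "t' < n"
    using a n_pos by (simp_all add: s_def t'_def asrc_def)
  have A: "A \<in> PA n"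
    using arrel_in_PA[OF n_pos a] by (simp add: A_def)
  have "G (sigma a) = pmul n (pmul n (vert ((s + d) mod n)) (G (X A))) (vert ((t' + d) mod n))"
    using G_pmul[OF pmul_vert_left_in_PA[OF X_in_PA[OF A]] vert_in_PA[OF t']]
      G_pmul[OF vert_in_PA[OF s] X_in_PA[OF A]] G_vert s t'
    by (simp add: sigma_eq_pmul[OF a] s_def t'_def A_def)
  moreover have "X (arrel n (shift_arrow a)) = psmult (inverse (rot_coeff a * lam)) (G (X A))"
  proof -
    have "G (X A) = psmult (lam * rot_coeff a) (X (arrel n (shift_arrow a)))"
      using G_X[OF A] X_psmult[OF arrel_in_PA[OF n_pos], of "shift_arrow a"] G_arrel[OF a] n_pos
      by (simp add: A_def shift_arrow_def psmult_def fun_eq_iff mult.assoc)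
    moreover have "rot_coeff a \<noteq> 0"
      using a mu_nz by (simp add: rot_coeff_def)
    ultimately show ?thesis
      using lam_nz by (simp add: psmult_def fun_eq_iff field_simps)
  qed
  moreover have "fst (shift_arrow a) < n"
    using n_pos by (simp add: shift_arrow_def)
  ultimately show ?thesis
    by (simp add: sigma_eq_pmul asrc_shift_arrow atgt_shift_arrow fun_eq_iff psmult_def
        pmul_vert_left pmul_vert_right s_def t'_def)
qed

lemma sigma_nonzero_path:
  assumes a: "fst a < n" and nz: "sigma a w \<noteq> 0"
  shows "valid_path n w" "length (snd w) \<le> 1"
    and "fst w = asrc n a" "ptgt n w = (atgt n a + d) mod n"
proof -
  have "X (arrel n a) \<in> ple1 n"
    using X_arr a by (cases a) auto
  moreover have "X (arrel n a) w \<noteq> 0"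
    and "fst w = asrc n a \<and> ptgt n w = (atgt n a + d) mod n"
    using nz by (simp_all add: sigma_eq_restrict[OF a] split: if_splits)
  ultimately show "valid_path n w" "length (snd w) \<le> 1"
    and "fst w = asrc n a" "ptgt n w = (atgt n a + d) mod n"
    unfolding ple1_def PA_def by blast+
qed

lemma sigma_a_nonzero_path:
  assumes i: "i < n" and nz: "sigma (i, True) w \<noteq> 0"
  shows "d = n - 1 \<and> w = (i, []) \<or> d = n - 2 \<and> w = (i, [((i + n - 1) mod n, False)])"
proof -
  have valid: "valid_path n w" and len: "length (snd w) \<le> 1"
    and src: "fst w = i" and tgt: "ptgt n w = ((i + 1) mod n + d) mod n"
    using sigma_nonzero_path[of "(i, True)" w] i nz by (simp_all add: asrc_def atgt_def)
  from valid len show ?thesis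
  proof (cases rule: valid_path_length_le_1)
    case trivial
    from trivial src tgt have "((i + 1) mod n + d) mod n = i"
      by (cases w) simp
    with i d_pos d_less have "d = n - 1"
      by (simp add: add_mod_cases Suc_mod_cases split: if_splits)
    with trivial src show ?thesis by (cases w) simp
  next
    case (arrow j b)
    have "\<not> b"
    proof
      assume b
      with arrow src tgt have "((i + 1) mod n + d) mod n = (i + 1) mod n"
        by (simp add: asrc_def atgt_def)
      with shift_neq[of "(i + 1) mod n"] n_pos show False by simp
    qed
    with arrow src tgt have j: "(j + 1) mod n = i" and "((i + 1) mod n + d) mod n = j"
      by (simp_all add: asrc_def atgt_def)
    with i \<open>j < n\<close> d_pos d_less have "d = n - 2"
      by (simp add: add_mod_cases Suc_mod_cases split: if_splits)
    moreover have "j = (i + n - 1) mod n"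
      using Suc_mod_pred[OF \<open>j < n\<close>] j by simp
    ultimately show ?thesis
      using arrow src \<open>\<not> b\<close> by (cases w) simp
  qed
qed

lemma sigma_as_nonzero_path:
  assumes i: "i < n" and nz: "sigma (i, False) w \<noteq> 0"
  shows "d = 1 \<and> w = ((i + 1) mod n, []) \<or> d = 2 \<and> w = ((i + 1) mod n, [((i + 1) mod n, True)])"
proof -
  have valid: "valid_path n w" and len: "length (snd w) \<le> 1"
    and src: "fst w = (i + 1) mod n" and tgt: "ptgt n w = (i + d) mod n"
    using sigma_nonzero_path[of "(i, False)" w] i nz by (simp_all add: asrc_def atgt_def)
  from valid len show ?thesis
  proof (cases rule: valid_path_length_le_1)
    case trivial
    from trivial src tgt have "(i + 1) mod n = (i + d) mod n"
      by (cases w) simp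
    with i d_pos d_less have "d = 1"
      by (simp add: add_mod_cases Suc_mod_cases split: if_splits)
    with trivial src show ?thesis by (cases w) simp
  next
    case (arrow j b)
    have b
    proof (rule ccontr)
      assume "\<not> b"
      with arrow src tgt have "(j + 1) mod n = (i + 1) mod n" and "j = (i + d) mod n"
        by (simp_all add: asrc_def atgt_def)
      moreover from this(1) i \<open>j < n\<close> have "j = i"
        by (simp add: add_mod_cases Suc_mod_cases split: if_splits)
      ultimately show False
        using shift_neq[OF i] by simp
    qed
    with arrow src tgt have "j = (i + 1) mod n" and "((i + 1) mod n + 1) mod n = (i + d) mod n"
      by (simp_all add: asrc_def atgt_def)
    with i d_pos d_less have "d = 2"
      by (simp add: add_mod_cases Suc_mod_cases split: if_splits)
    with arrow src \<open>b\<close> \<open>j = (i + 1) mod n\<close> show ?thesis by (cases w) simp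
  qed
qed

lemma sigma_a_eq_vert:
  assumes "d = n - 1" "i < n"
  shows "sigma (i, True) = psmult (sigma (i, True) (i, [])) (vert i)"
  unfolding vert_def
  by (rule eq_psmult_bvec_if_supp_single)
    (use sigma_a_nonzero_path[OF assms(2)] assms(1) n_ge_2 in fastforce)

lemma sigma_a_eq_arrS:
  assumes "d = n - 2" "i < n"
  shows "sigma (i, True) = psmult (sigma (i, True) (i, [((i + n - 1) mod n, False)]))
                                  (arrS n ((i + n - 1) mod n))"
  unfolding arrS_def arrel_def using pred_mod_Suc[OF assms(2)]
  by (simp add: asrc_def)
    (rule eq_psmult_bvec_if_supp_single,
      use sigma_a_nonzero_path[OF assms(2)] assms(1) n_ge_2 in fastforce)

lemma sigma_a_eq_0:
  assumes "d \<noteq> n - 1" "d \<noteq> n - 2" "i < n"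
  shows "sigma (i, True) = (\<lambda>_. 0)"
  using sigma_a_nonzero_path[OF assms(3)] assms(1,2) by blast

lemma sigma_as_eq_vert:
  assumes "d = 1" "i < n"
  shows "sigma (i, False) = psmult (sigma (i, False) ((i + 1) mod n, [])) (vert ((i + 1) mod n))"
  unfolding vert_def
  by (rule eq_psmult_bvec_if_supp_single) (use sigma_as_nonzero_path[OF assms(2)] assms(1) in auto)

lemma sigma_as_eq_arrA:
  assumes "d = 2" "i < n"
  shows "sigma (i, False) = psmult (sigma (i, False) ((i + 1) mod n, [((i + 1) mod n, True)]))
                                   (arrA n ((i + 1) mod n))"
  unfolding arrA_def arrel_def
  by (simp add: asrc_def)
    (rule eq_psmult_bvec_if_supp_single, use sigma_as_nonzero_path[OF assms(2)] assms(1) in auto)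

lemma sigma_as_eq_0:
  assumes "d \<noteq> 1" "d \<noteq> 2" "i < n"
  shows "sigma (i, False) = (\<lambda>_. 0)"
  using sigma_as_nonzero_path[OF assms(3)] assms(1,2) by blast

lemma sigma_shift_psmult_vert:
  assumes a: "fst a < n" and j: "j < n" and eq: "sigma a = psmult c (vert j)"
  shows "sigma (shift_arrow a) = psmult (c / (rot_coeff a * lam)) (vert ((j + d) mod n))"
  using sigma_shift_arrow[OF a] eq G_psmult[OF vert_in_PA[OF j]] G_vert j
  by (simp add: psmult_def fun_eq_iff divide_inverse mult_ac)

lemma sigma_shift_psmult_arrel:
  assumes a: "fst a < n" and b: "fst b < n" and eq: "sigma a = psmult c (arrel n b)"
  shows "sigma (shift_arrow a) = psmult (c * rot_coeff b / (rot_coeff a * lam)) (arrel n (shift_arrow b))"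
  using sigma_shift_arrow[OF a] eq G_psmult[OF arrel_in_PA[OF n_pos b]] G_arrel[OF b]
  by (simp add: psmult_def fun_eq_iff divide_inverse mult_ac)

lemma shift_arrow_Pair [simp]: "shift_arrow (i, b) = ((i + d) mod n, b)"
  by (simp add: shift_arrow_def)

lemma sigma_a_vert_step:
  assumes dn: "d = n - 1" and k: "k + 1 < n"
  shows "sigma (k + 1, True) (k + 1, []) = lam * mu (k + 1) * sigma (k, True) (k, [])"
proof -
  let ?c = "sigma (k + 1, True) (k + 1, [])"
  have k': "(k + 1 + d) mod n = k"
    using dn k by (intro mod_eq_of_eq_add) simp_all
  have "sigma (shift_arrow (k + 1, True))
      = psmult (?c / (rot_coeff (k + 1, True) * lam)) (vert ((k + 1 + d) mod n))"
    using k by (intro sigma_shift_psmult_vert sigma_a_eq_vert dn) simp_all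
  then have "sigma (k, True) (k, []) = ?c / (mu (k + 1) * lam)"
    unfolding shift_arrow_Pair fst_conv snd_conv k' by (simp add: rot_coeff_def psmult_def vert_apply)
  then show ?thesis
    using mu_nz lam_nz k by (simp add: field_simps)
qed

lemma sigma_a_arr_step:
  assumes dn: "d = n - 2" and k: "k + 2 < n"
  shows "sigma (k + 2, True) (k + 2, [((k + 2 + n - 1) mod n, False)])
       = lam * mu (k + 2) / mus (k + 1) * sigma (k, True) (k, [((k + n - 1) mod n, False)])"
proof -
  let ?c = "sigma (k + 2, True) (k + 2, [((k + 2 + n - 1) mod n, False)])"
  have k2: "(k + 2 + d) mod n = k" and k1: "(k + 2 + n - 1) mod n = k + 1"
    using dn k by (intro mod_eq_of_eq_add; simp)+
  have k1': "k + 1 + d = k + n - 1"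
    using dn k by simp
  have "sigma (k + 2, True) = psmult ?c (arrel n (k + 1, False))"
    using sigma_a_eq_arrS[OF dn k] unfolding k1 arrS_def .
  then have "sigma (shift_arrow (k + 2, True)) = psmult (?c * rot_coeff (k + 1, False)
      / (rot_coeff (k + 2, True) * lam)) (arrel n (shift_arrow (k + 1, False)))"
    using k by (intro sigma_shift_psmult_arrel) simp_all
  then have "sigma (k, True) (k, [((k + n - 1) mod n, False)]) = ?c * mus (k + 1) / (mu (k + 2) * lam)"
    unfolding shift_arrow_Pair fst_conv snd_conv k2 k1'
    using pred_mod_Suc[of k n] k by (simp add: rot_coeff_def psmult_def arrel_apply asrc_def)
  then show ?thesis
    using mu_nz lam_nz k by (simp add: field_simps)
qed

lemma sigma_as_vert_step:
  assumes dn: "d = 1" and k: "k + 1 < n"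
  shows "sigma (k + 1, False) ((k + 1 + 1) mod n, [])
       = inverse (mus k * lam) * sigma (k, False) ((k + 1) mod n, [])"
proof -
  let ?c = "sigma (k, False) ((k + 1) mod n, [])"
  have "sigma (k, False) = psmult ?c (vert (k + 1))"
    using sigma_as_eq_vert[OF dn, of k] k by simp
  then have "sigma (shift_arrow (k, False))
      = psmult (?c / (rot_coeff (k, False) * lam)) (vert ((k + 1 + d) mod n))"
    using k by (intro sigma_shift_psmult_vert) simp_all
  moreover have "(k + d) mod n = k + 1" and "k + 1 + d = k + 1 + 1"
    using dn k by simp_all
  ultimately show ?thesis
    unfolding shift_arrow_Pair fst_conv snd_conv
    by (simp add: rot_coeff_def psmult_def vert_apply divide_inverse mult_ac)
qed

lemma sigma_as_arr_step:
  assumes dn: "d = 2" and k: "k + 2 < n"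
  shows "sigma (k + 2, False) ((k + 2 + 1) mod n, [((k + 2 + 1) mod n, True)])
       = mu (k + 1) / (mus k * lam) * sigma (k, False) ((k + 1) mod n, [((k + 1) mod n, True)])"
proof -
  let ?c = "sigma (k, False) ((k + 1) mod n, [((k + 1) mod n, True)])"
  have "sigma (k, False) = psmult ?c (arrel n (k + 1, True))"
    using sigma_as_eq_arrA[OF dn, of k] k by (simp add: arrA_def)
  then have "sigma (shift_arrow (k, False)) = psmult (?c * rot_coeff (k + 1, True)
      / (rot_coeff (k, False) * lam)) (arrel n (shift_arrow (k + 1, True)))"
    using k by (intro sigma_shift_psmult_arrel) simp_all
  moreover have "(k + d) mod n = k + 2" and "k + 1 + d = k + 2 + 1"
    using dn k by simp_all
  ultimately show ?thesis
    unfolding shift_arrow_Pair fst_conv snd_conv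
    by (simp add: rot_coeff_def psmult_def arrel_apply asrc_def divide_inverse mult_ac)
qed

lemma sigma_a_closed_form:
  "\<exists>c0 c1. \<forall>i<n. sigma (i, True) =
     (if d = n - 2 then
        (if even i then
           psmult (lam ^ (i div 2) * (\<Prod>j=1..i div 2. mu (2*j))
                     / (\<Prod>j=1..i div 2. mus (2*j - 1)) * c0) (arrS n ((i + n - 1) mod n))
         else
           psmult (lam ^ ((i - 1) div 2) * (\<Prod>j=1..(i - 1) div 2. mu (2*j + 1))
                     / (\<Prod>j=1..(i - 1) div 2. mus (2*j)) * c1) (arrS n ((i + n - 1) mod n)))
      else if d = n - 1 then
        psmult (lam ^ i * (\<Prod>j=1..i. mu j) * c0) (vert i)
      else (\<lambda>_. 0))"
proof -
  define ca where "ca i = sigma (i, True) (i, [((i + n - 1) mod n, False)])" for i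
  define cv where "cv i = sigma (i, True) (i, [])" for i
  have ca_rec: "ca (2 * k + e) = (\<Prod>l<k. lam * mu (2 * l + e + 2) / mus (2 * l + e + 1)) * ca e"
    if "d = n - 2" "2 * k + e < n" for k e
    using prod_recurrence[of 2 n ca "\<lambda>k. lam * mu (k + 2) / mus (k + 1)" k e]
      sigma_a_arr_step[OF that(1)] that(2)
    by (simp add: ca_def)
  have even: "sigma (i, True) = psmult (lam ^ (i div 2) * (\<Prod>j=1..i div 2. mu (2*j))
      / (\<Prod>j=1..i div 2. mus (2*j - 1)) * ca 0) (arrS n ((i + n - 1) mod n))"
    if "d = n - 2" "even i" "i < n" for i
    using sigma_a_eq_arrS[OF that(1,3)] ca_rec[OF that(1), of "i div 2" 0] that(2,3)
    by (simp add: ca_def prod_dividef prod.distrib prod.atLeast1_atMost_eq)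
  have odd: "sigma (i, True) = psmult (lam ^ ((i - 1) div 2) * (\<Prod>j=1..(i - 1) div 2. mu (2*j + 1))
      / (\<Prod>j=1..(i - 1) div 2. mus (2*j)) * ca 1) (arrS n ((i + n - 1) mod n))"
    if "d = n - 2" "odd i" "i < n" for i
    using sigma_a_eq_arrS[OF that(1,3)] ca_rec[OF that(1), of "(i - 1) div 2" 1] that(2,3)
    by (simp add: ca_def prod_dividef prod.distrib prod.atLeast1_atMost_eq)
  have vert: "sigma (i, True) = psmult (lam ^ i * (\<Prod>j=1..i. mu j) * cv 0) (vert i)"
    if "d = n - 1" "i < n" for i
    using sigma_a_eq_vert[OF that] prod_recurrence[of 1 n cv "\<lambda>k. lam * mu (k + 1)" i 0]
      sigma_a_vert_step[OF that(1)] that(2)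
    by (simp add: cv_def prod.distrib prod.atLeast1_atMost_eq)
  show ?thesis
    using even odd vert sigma_a_eq_0 n_ge_2
    by (intro exI[of _ "if d = n - 2 then ca 0 else cv 0"] exI[of _ "ca 1"] allI impI) auto
qed

lemma sigma_as_closed_form:
  "\<exists>c0s c1s. \<forall>i<n. sigma (i, False) =
     (if d = 2 then
        (if even i then
           psmult (inverse (lam ^ (i div 2)) * (\<Prod>j=1..i div 2. mu (2*j - 1))
                     / (\<Prod>j<i div 2. mus (2*j)) * c0s) (arrA n ((i + 1) mod n))
         else
           psmult (inverse (lam ^ ((i - 1) div 2)) * (\<Prod>j=1..(i - 1) div 2. mu (2*j))
                     / (\<Prod>j=1..(i - 1) div 2. mus (2*j - 1)) * c1s) (arrA n ((i + 1) mod n)))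
      else if d = 1 then
        psmult (inverse (lam ^ i * (\<Prod>j<i. mus j)) * c0s) (vert ((i + 1) mod n))
      else (\<lambda>_. 0))"
proof -
  define ca where "ca i = sigma (i, False) ((i + 1) mod n, [((i + 1) mod n, True)])" for i
  define cv where "cv i = sigma (i, False) ((i + 1) mod n, [])" for i
  have ca_rec: "ca (2 * k + e) = (\<Prod>l<k. mu (2 * l + e + 1) / (mus (2 * l + e) * lam)) * ca e"
    if "d = 2" "2 * k + e < n" for k e
    using prod_recurrence[of 2 n ca "\<lambda>k. mu (k + 1) / (mus k * lam)" k e]
      sigma_as_arr_step[OF that(1)] that(2)
    by (simp add: ca_def)
  have even: "sigma (i, False) = psmult (inverse (lam ^ (i div 2)) * (\<Prod>j=1..i div 2. mu (2*j - 1))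
      / (\<Prod>j<i div 2. mus (2*j)) * ca 0) (arrA n ((i + 1) mod n))"
    if "d = 2" "even i" "i < n" for i
    using sigma_as_eq_arrA[OF that(1,3)] ca_rec[OF that(1), of "i div 2" 0] that(2,3)
    by (simp add: ca_def prod_dividef prod.distrib prod.atLeast1_atMost_eq field_simps)
  have odd: "sigma (i, False) = psmult (inverse (lam ^ ((i - 1) div 2)) * (\<Prod>j=1..(i - 1) div 2. mu (2*j))
      / (\<Prod>j=1..(i - 1) div 2. mus (2*j - 1)) * ca 1) (arrA n ((i + 1) mod n))"
    if "d = 2" "odd i" "i < n" for i
    using sigma_as_eq_arrA[OF that(1,3)] ca_rec[OF that(1), of "(i - 1) div 2" 1] that(2,3)
    by (simp add: ca_def prod_dividef prod.distrib prod.atLeast1_atMost_eq field_simps)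
  have vert: "sigma (i, False) = psmult (inverse (lam ^ i * (\<Prod>j<i. mus j)) * cv 0) (vert ((i + 1) mod n))"
    if "d = 1" "i < n" for i
    using sigma_as_eq_vert[OF that] prod_recurrence[of 1 n cv "\<lambda>k. inverse (mus k * lam)" i 0]
      sigma_as_vert_step[OF that(1)] that(2)
    by (simp add: cv_def prod.distrib prod_inversef[symmetric] comp_def power_inverse mult.commute)
  show ?thesis
    using even odd vert sigma_as_eq_0
    by (intro exI[of _ "if d = 2 then ca 0 else cv 0"] exI[of _ "ca 1"] allI impI) auto
qed

end

theorem lemma3p1:
  fixes lam :: "'k::field" and r m n d :: nat
    and G X :: "(qpath \<Rightarrow> 'k) \<Rightarrow> (qpath \<Rightarrow> 'k)" and mu mus :: "nat \<Rightarrow> 'k"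
  assumes r_gt: "1 < r" and m_pos: "0 < m" and r_dvd: "r dvd m"
    and lam_root: "lam ^ r = 1" and lam_prim: "\<forall>k. 0 < k \<and> k < r \<longrightarrow> lam ^ k \<noteq> 1"
    and r_char: "of_nat r \<noteq> (0::'k)"
    and n_ge: "3 \<le> n"
    and action: "taft_module_algebra n lam r m G X"
    and G_len: "\<forall>l. \<forall>f\<in>plen n l. G f \<in> plen n l"
    and X_vert: "\<forall>i<n. X (vert i) \<in> plen n 0"
    and X_arr: "\<forall>i<n. \<forall>b. X (arrel n (i, b)) \<in> ple1 n"
    and faithful: "inner_faithful n lam r m G X"
    and d_pos: "0 < d" and d_le: "d \<le> n - 1"
    and mu_nz: "\<forall>i<n. mu i \<noteq> 0 \<and> mus i \<noteq> 0"
    and G_vert: "\<forall>i<n. G (vert i) = vert ((i + d) mod n)"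
    and G_a: "\<forall>i<n. G (arrA n i) = psmult (mu i) (arrA n ((i + d) mod n))"
    and G_as: "\<forall>i<n. G (arrS n i) = psmult (mus i) (arrS n ((i + d) mod n))"
  shows "\<exists>c0 c1 c0s c1s. \<forall>i<n.
     qtaft_sigma n lam G X (i, True) =
       (if d = n - 2 then
          (if even i then
             psmult (lam ^ (i div 2) * (\<Prod>j=1..i div 2. mu (2*j))
                       / (\<Prod>j=1..i div 2. mus (2*j - 1)) * c0) (arrS n ((i + n - 1) mod n))
           else
             psmult (lam ^ ((i - 1) div 2) * (\<Prod>j=1..(i - 1) div 2. mu (2*j + 1))
                       / (\<Prod>j=1..(i - 1) div 2. mus (2*j)) * c1) (arrS n ((i + n - 1) mod n)))
        else if d = n - 1 then
          psmult (lam ^ i * (\<Prod>j=1..i. mu j) * c0) (vert i)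
        else (\<lambda>_. 0)) \<and>
     qtaft_sigma n lam G X (i, False) =
       (if d = 2 then
          (if even i then
             psmult (inverse (lam ^ (i div 2)) * (\<Prod>j=1..i div 2. mu (2*j - 1))
                       / (\<Prod>j<i div 2. mus (2*j)) * c0s) (arrA n ((i + 1) mod n))
           else
             psmult (inverse (lam ^ ((i - 1) div 2)) * (\<Prod>j=1..(i - 1) div 2. mu (2*j))
                       / (\<Prod>j=1..(i - 1) div 2. mus (2*j - 1)) * c1s) (arrA n ((i + 1) mod n)))
        else if d = 1 then
          psmult (inverse (lam ^ i * (\<Prod>j<i. mus j)) * c0s) (vert ((i + 1) mod n))
        else (\<lambda>_. 0))"
proof -
  have "lam \<noteq> 0"
    using lam_root r_gt by (cases "lam = 0") (auto simp: power_0_left)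
  moreover have "d < n"
    using d_pos d_le by simp
  ultimately interpret taft_rotation_action n lam r m G X d mu mus
    using action X_vert d_pos G_vert X_arr mu_nz G_a G_as by unfold_locales
  from sigma_a_closed_form sigma_as_closed_form show ?thesis
    by blast
qed

end
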